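(* Let $\mathsf{\Sigma}\in\mathbb{R}^{N\times N_S}$ and $\mathsf{\Lambda}\in\mathbb{R}^{N\times N_L}$ be the Star-to-RWG and Loop-to-RWG matrices of a triangular surface mesh (so that $\mathsf{\Sigma}^{\mathrm T}\mathsf{\Lambda}=\mathsf{0}$), with $\mathsf{P}^\Sigma=\mathsf{\Sigma}(\mathsf{\Sigma}^{\mathrm T}\mathsf{\Sigma})^+\mathsf{\Sigma}^{\mathrm T}$, $\mathbb{P}^\Lambda=\mathsf{\Lambda}(\mathsf{\Lambda}^{\mathrm T}\mathsf{\Lambda})^+\mathsf{\Lambda}^{\mathrm T}$, and quasi-Helmholtz Laplacian filters $\mathsf{P}_n^\Sigma=\mathsf{\Sigma}((\mathsf{\Sigma}^{\mathrm T}\mathsf{\Sigma})_n)^+\mathsf{\Sigma}^{\mathrm T}$, $\mathbb{P}_n^\Lambda=\mathsf{\Lambda}((\mathsf{\Lambda}^{\mathrm T}\mathsf{\Lambda})_n)^+\mathsf{\Lambda}^{\mathrm T}$, $\mathsf{P}_n^{\Lambda H}=\mathbb{P}_n^\Lambda+\mathsf{I}-\mathsf{P}^\Sigma-\mathbb{P}^\Lambda$, $\mathbb{P}_n^{\Sigma H}=\mathsf{P}_n^\Sigma+\mathsf{I}-\mathbb{P}^\Lambda-\mathsf{P}^\Sigma$ (indices $n$ ranging over $1,\dots,N_S$ for the $\Sigma$-filters and $1,\dots,N_L$ for the $\Lambda$-filters). Then for all admissible $m,n$: $$\mathsf{P}_m^\Sigma\mathsf{P}_n^{\Lambda H}=\mathsf{0}\qquad\text{and}\qquad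 \mathbb{P}_m^\Lambda\mathbb{P}_n^{\Sigma H}=\mathsf{0}.$$
   Context: Consider a closed triangulated surface with $N$ edges, $N_S$ triangles and $N_L$ vertices; $\mathsf{I}$ is the $N\times N$ identity. Each edge $m$ is shared by two triangles $c_m^+$, $c_m^-$. $[\mathsf{\Sigma}]_{mn}=1$ if cell $n$ is $c_m^+$, $-1$ if cell $n$ is $c_m^-$, $0$ otherwise. $[\mathsf{\Lambda}]_{mn}=\pm1$ when vertex $n$ is an endpoint of edge $m$ (opposite signs for the two endpoints, fixed by the orientation convention of the RWG functions), $0$ otherwise; with this convention $\mathsf{\Sigma}^{\mathrm T}\mathsf{\Lambda}=\mathsf{0}$. $^+$ denotes the Moore–Penrose pseudo-inverse. For $\mathsf{X}\in\{\mathsf{\Sigma},\mathsf{\Lambda}\}$ with $N_x$ columns, fix an SVD $\mathsf{X}=\mathsf{U}_X\mathsf{S}_X\mathsf{V}_X^{\mathrm T}$ with $\mathsf{V}_X$ orthogonal $N_x\times N_x$ and singular values $\sigma_{X,1}\ge\dots\ge\sigma_{X,N_x}\ge0$, so $\mathsf{X}^{\mathrm T}\mathsf{X}=\mathsf{V}_X\mathrm{diag}(\sigma_{X,i}^2)\mathsf{V}_X^{\mathrm T}$. For $1\le n\le N_x$, $\mathsf{L}_{X,n}$ is diagonal with $[\mathsf{L}_{X,n}]_{ii}=\sigma_{X,i}$ if $i>N_x-n$ and $0$ otherwise, and $(\mathsf{X}^{\mathrm T}\mathsf{X})_n=\mathsf{V}_X\mathsf{L}_{X,n}^2\mathsf{V}_X^{\mathrm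 T}$. *)

theory Defs
  imports "Jordan_Normal_Form.Matrix"
begin

definition pinv :: "real mat \<Rightarrow> real mat" where
  "pinv A = (THE X. X \<in> carrier_mat (dim_col A) (dim_row A) \<and>
                    A * X * A = A \<and> X * A * X = X \<and>
                    transpose_mat (A * X) = A * X \<and> transpose_mat (X * A) = X * A)"

definition orth_mat :: "nat \<Rightarrow> real mat \<Rightarrow> bool" where
  "orth_mat n V \<longleftrightarrow> V \<in> carrier_mat n n \<and> transpose_mat V * V = 1\<^sub>m n \<and> V * transpose_mat V = 1\<^sub>m n"

definition is_svd :: "real mat \<Rightarrow> real mat \<Rightarrow> (nat \<Rightarrow> real) \<Rightarrow> real mat \<Rightarrow> bool" where
  "is_svd X U \<sigma> V \<longleftrightarrow>
     orth_mat (dim_row X) U \<and> orth_mat (dim_col X) V \<and>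
     (\<forall>i<dim_col X. 0 \<le> \<sigma> i) \<and>
     (\<forall>i j. i \<le> j \<and> j < dim_col X \<longrightarrow> \<sigma> j \<le> \<sigma> i) \<and>
     X = U * mat (dim_row X) (dim_col X) (\<lambda>(i,j). if i = j then \<sigma> i else 0) * transpose_mat V"

text \<open>L_{X,n}: keeps the n smallest singular values. With 0-based index i, the
  paper's condition (1-based) i' > N_x - n becomes i >= N_x - n.\<close>
definition Lmat :: "nat \<Rightarrow> (nat \<Rightarrow> real) \<Rightarrow> nat \<Rightarrow> real mat" where
  "Lmat Nx \<sigma> n = mat Nx Nx (\<lambda>(i,j). if i = j \<and> Nx - n \<le> i then \<sigma> i else 0)"

definition gram_n :: "nat \<Rightarrow> real mat \<Rightarrow> (nat \<Rightarrow> real) \<Rightarrow> nat \<Rightarrow> real mat" where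
  "gram_n Nx V \<sigma> n = V * (Lmat Nx \<sigma> n * Lmat Nx \<sigma> n) * transpose_mat V"

definition proj :: "real mat \<Rightarrow> real mat" where
  "proj X = X * pinv (transpose_mat X * X) * transpose_mat X"

definition filt :: "real mat \<Rightarrow> real mat \<Rightarrow> (nat \<Rightarrow> real) \<Rightarrow> nat \<Rightarrow> real mat" where
  "filt X V \<sigma> n = X * pinv (gram_n (dim_col X) V \<sigma> n) * transpose_mat X"

definition star_to_rwg :: "nat \<Rightarrow> nat \<Rightarrow> real mat \<Rightarrow> bool" where
  "star_to_rwg N NS S \<longleftrightarrow> S \<in> carrier_mat N NS \<and>
     (\<forall>m<N. \<exists>p q. p < NS \<and> q < NS \<and> p \<noteq> q \<and> S $$ (m,p) = 1 \<and> S $$ (m,q) = -1 \<and>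
        (\<forall>k<NS. k \<noteq> p \<and> k \<noteq> q \<longrightarrow> S $$ (m,k) = 0))"

definition loop_to_rwg :: "nat \<Rightarrow> nat \<Rightarrow> real mat \<Rightarrow> bool" where
  "loop_to_rwg N NL L \<longleftrightarrow> L \<in> carrier_mat N NL \<and>
     (\<forall>m<N. \<exists>a b s. a < NL \<and> b < NL \<and> a \<noteq> b \<and> (s = 1 \<or> s = -1) \<and>
        L $$ (m,a) = s \<and> L $$ (m,b) = -s \<and>
        (\<forall>k<NL. k \<noteq> a \<and> k \<noteq> b \<longrightarrow> L $$ (m,k) = 0))"

end

theory Submission
  imports Defs
begin

text \<open>Both products have the form F (M + I - P_A - P_B) with F = A Q A^T, where A^T B = 0 for
  the two mesh matrices A, B and where M, P_A, P_B are of the form B R B^T, A P A^T, B P' B^T.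
  Orthogonality kills F M and F P_B, while F P_A = F because A^T A (A^T A)^+ A^T = A^T; hence the
  product is F - F = 0. The combinatorial structure of the mesh matrices enters
  only through their dimensions, and the filter orders m, n are arbitrary.\<close>

text \<open>Reducing carrier conditions to equations between dimensions lets simp discharge the
  side conditions of assoc_mult_mat, whose inner dimensions it would otherwise have to guess.\<close>
bundle carrier_mat_dims = carrier_mat_def [simp] carrier_matD [simp del]

lemma dim_mat_diag [simp]: "dim_row (mat_diag n f) = n" "dim_col (mat_diag n f) = n"
  by (simp_all add: mat_diag_def)

lemma orth_matD:
  assumes "orth_mat n V"
  shows "V \<in> carrier_mat n n" "transpose_mat V * V = 1\<^sub>m n"
  using assms unfolding orth_mat_def by auto

lemma orth_conj_mult:
  assumes "orth_mat n V"
  shows "(V * mat_diag n f * transpose_mat V) * (V * mat_diag n g * transpose_mat V)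
       = V * mat_diag n (\<lambda>i. f i * g i) * transpose_mat V"
proof -
  note V = orth_matD[OF assms]
  have "(V * mat_diag n f * transpose_mat V) * (V * mat_diag n g * transpose_mat V)
      = V * (mat_diag n f * (transpose_mat V * V)) * mat_diag n g * transpose_mat V"
    using V(1) including carrier_mat_dims by simp
  also have "\<dots> = V * mat_diag n (\<lambda>i. f i * g i) * transpose_mat V"
    using V(1) including carrier_mat_dims
    by (simp add: V(2) right_mult_one_mat[OF mat_diag_dim])
  finally show ?thesis .
qed

lemma orth_conj_transpose:
  assumes "orth_mat n V"
  shows "transpose_mat (V * mat_diag n f * transpose_mat V) = V * mat_diag n f * transpose_mat V"
proof -
  have "transpose_mat (mat_diag n f) = mat_diag n f"
    by (auto simp: mat_diag_def)
  with orth_matD(1)[OF assms] show ?thesis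
    including carrier_mat_dims by (simp add: transpose_mult)
qed

lemma penrose_unique:
  fixes A X Y :: "real mat"
  assumes A: "A \<in> carrier_mat n m" and X: "X \<in> carrier_mat m n" and Y: "Y \<in> carrier_mat m n"
    and X1: "A * X * A = A" and X2: "X * A * X = X"
    and X3: "transpose_mat (A * X) = A * X" and X4: "transpose_mat (X * A) = X * A"
    and Y1: "A * Y * A = A" and Y2: "Y * A * Y = Y"
    and Y3: "transpose_mat (A * Y) = A * Y" and Y4: "transpose_mat (Y * A) = Y * A"
  shows "X = Y"
proof -
  have At: "transpose_mat A * transpose_mat Z * transpose_mat A = transpose_mat A"
    if Z: "Z \<in> carrier_mat m n" and AZA: "A * Z * A = A" for Z
  proof -
    have "transpose_mat A * transpose_mat Z * transpose_mat A = transpose_mat (A * Z * A)"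
      using A Z including carrier_mat_dims by (simp add: transpose_mult)
    then show ?thesis
      unfolding AZA .
  qed
  have "X = X * transpose_mat X * transpose_mat A"
    using A X X2 X3 including carrier_mat_dims by (simp add: transpose_mult)
  also have "\<dots> = X * transpose_mat X * (transpose_mat A * transpose_mat Y * transpose_mat A)"
    by (simp only: At[OF Y Y1])
  also have "\<dots> = X * transpose_mat (A * X) * transpose_mat (A * Y)"
    using A X Y including carrier_mat_dims by (simp add: transpose_mult)
  also have "\<dots> = X * A * Y"
    using A X Y X2 X3 Y3 including carrier_mat_dims by simp
  finally have XAY: "X = X * A * Y" .
  have "Y = transpose_mat A * transpose_mat Y * Y"
    using A Y Y2 Y4 including carrier_mat_dims by (simp add: transpose_mult)
  also have "\<dots> = (transpose_mat A * transpose_mat X * transpose_mat A) * transpose_mat Y * Y"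
    by (simp only: At[OF X X1])
  also have "\<dots> = transpose_mat (X * A) * transpose_mat (Y * A) * Y"
    using A X Y including carrier_mat_dims by (simp add: transpose_mult)
  also have "\<dots> = X * A * Y"
    using A X Y X4 Y2 Y4 including carrier_mat_dims by simp
  finally show ?thesis using XAY by simp
qed

lemma pinv_eqI:
  fixes A X :: "real mat"
  assumes A: "A \<in> carrier_mat n m" and X: "X \<in> carrier_mat m n"
    and "A * X * A = A" "X * A * X = X"
    and "transpose_mat (A * X) = A * X" "transpose_mat (X * A) = X * A"
  shows "pinv A = X"
  unfolding pinv_def
proof (rule the_equality)
  fix Y assume "Y \<in> carrier_mat (dim_col A) (dim_row A) \<and> A * Y * A = A \<and> Y * A * Y = Y \<and>
      transpose_mat (A * Y) = A * Y \<and> transpose_mat (Y * A) = Y * A"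
  with A X assms(3-) show "Y = X"
    using penrose_unique[of A n m Y X] by auto
qed (use A X assms in auto)

text \<open>Since inverse 0 = 0 for reals, inverting the diagonal entries yields the pseudo-inverse
  even for a singular diagonal.\<close>
lemma pinv_orth_conj_diag:
  assumes V: "orth_mat n V"
  shows "pinv (V * mat_diag n d * transpose_mat V)
    = V * mat_diag n (\<lambda>i. inverse (d i)) * transpose_mat V"
    (is "pinv ?A = ?X")
proof (rule pinv_eqI)
  have inverse_cancel: "x * inverse x * x = x" "inverse x * x * inverse x = inverse x" for x :: real
    by (cases "x = 0"; simp)+
  show "?A * ?X * ?A = ?A" "?X * ?A * ?X = ?X"
    "transpose_mat (?A * ?X) = ?A * ?X" "transpose_mat (?X * ?A) = ?X * ?A"
    by (simp_all only: orth_conj_mult[OF V] orth_conj_transpose[OF V] inverse_cancel)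
qed (use orth_matD(1)[OF V] in auto)

lemma orth_diagonalizable_pinv:
  assumes V: "orth_mat n V" and G: "G = V * mat_diag n d * transpose_mat V"
  shows "pinv G \<in> carrier_mat n n" and "G * pinv G * G = G"
proof -
  have "d i * inverse (d i) * d i = d i" for i
    by (cases "d i = 0") simp_all
  then show "G * pinv G * G = G"
    unfolding G pinv_orth_conj_diag[OF V] by (simp only: orth_conj_mult[OF V])
  show "pinv G \<in> carrier_mat n n"
    unfolding G pinv_orth_conj_diag[OF V] using orth_matD(1)[OF V] by auto
qed

lemma gram_mat_svd:
  assumes svd: "is_svd X U \<sigma> V" and X: "X \<in> carrier_mat N k"
  shows "transpose_mat X * X
    = V * mat_diag k (\<lambda>i. if i < N then \<sigma> i ^ 2 else 0) * transpose_mat V"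
proof -
  define S where "S = mat N k (\<lambda>(i,j). if i = j then \<sigma> i else (0::real))"
  have U: "U \<in> carrier_mat N N" "transpose_mat U * U = 1\<^sub>m N"
    and V: "V \<in> carrier_mat k k" and XS: "X = U * S * transpose_mat V"
    using svd X unfolding is_svd_def orth_mat_def S_def by auto
  have S: "S \<in> carrier_mat N k"
    unfolding S_def by simp
  have SS: "transpose_mat S * S = mat_diag k (\<lambda>i. if i < N then \<sigma> i ^ 2 else 0)"
  proof (rule eq_matI)
    fix i j assume ij: "i < dim_row (mat_diag k (\<lambda>i. if i < N then \<sigma> i ^ 2 else 0))"
      "j < dim_col (mat_diag k (\<lambda>i. if i < N then \<sigma> i ^ 2 else 0))"
    then have "(transpose_mat S * S) $$ (i,j)
        = (\<Sum>t<N. (if t = i then \<sigma> t else 0) * (if t = j then \<sigma> t else 0))"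
      by (simp add: S_def scalar_prod_def lessThan_atLeast0)
    also have "\<dots> = (\<Sum>t<N. if t = i then (if i = j then \<sigma> i ^ 2 else 0) else 0)"
      by (rule sum.cong) (auto simp: power2_eq_square)
    also have "\<dots> = mat_diag k (\<lambda>i. if i < N then \<sigma> i ^ 2 else 0) $$ (i,j)"
      using ij by (simp add: mat_diag_def)
    finally show "(transpose_mat S * S) $$ (i,j)
      = mat_diag k (\<lambda>i. if i < N then \<sigma> i ^ 2 else 0) $$ (i,j)" .
  qed (auto simp: S_def)
  have "transpose_mat X * X = V * (transpose_mat S * (transpose_mat U * U) * S) * transpose_mat V"
    unfolding XS using U(1) S V including carrier_mat_dims by (simp add: transpose_mult)
  then show ?thesis
    using S by (simp add: U(2) SS)
qed

lemma gram_n_orth_conj_diag: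
  "gram_n k V \<sigma> n
    = V * mat_diag k (\<lambda>i. (if k - n \<le> i then \<sigma> i else 0) ^ 2) * transpose_mat V"
proof -
  have "Lmat k \<sigma> n = mat_diag k (\<lambda>i. if k - n \<le> i then \<sigma> i else 0)"
    unfolding Lmat_def mat_diag_def by (rule cong_mat) auto
  then show ?thesis
    unfolding gram_n_def by (simp add: power2_eq_square)
qed

lemma mult_transpose_self_eq_zeroD:
  fixes H :: "real mat"
  assumes H: "H \<in> carrier_mat k N" and HH: "H * transpose_mat H = 0\<^sub>m k k"
  shows "H = 0\<^sub>m k N"
proof (rule eq_matI)
  fix i j assume i: "i < dim_row (0\<^sub>m k N)" and j: "j < dim_col (0\<^sub>m k N)"
  have "(\<Sum>t<N. H $$ (i,t) * H $$ (i,t)) = (H * transpose_mat H) $$ (i,i)"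
    using H i by (simp add: scalar_prod_def lessThan_atLeast0)
  also have "\<dots> = 0"
    using HH i by simp
  finally have "\<forall>t<N. H $$ (i,t) * H $$ (i,t) = 0"
    by (subst (asm) sum_nonneg_eq_0_iff) auto
  with i j show "H $$ (i,j) = 0\<^sub>m k N $$ (i,j)"
    by simp
qed (use H in auto)

text \<open>With E = G P X^T - X^T for the Gram matrix G = X^T X, the hypothesis gives E X = 0,
  hence E E^T = 0 because E^T = X (P^T G - 1).\<close>
lemma gram_mult_inner_inverse_transpose:
  fixes X P :: "real mat"
  assumes X: "X \<in> carrier_mat N k" and P: "P \<in> carrier_mat k k"
    and GPG: "transpose_mat X * X * P * (transpose_mat X * X) = transpose_mat X * X"
  shows "transpose_mat X * X * P * transpose_mat X = transpose_mat X"
proof -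
  define G where "G = transpose_mat X * X"
  define E where "E = G * P * transpose_mat X - transpose_mat X"
  have G: "G \<in> carrier_mat k k" and E: "E \<in> carrier_mat k N"
    using X P unfolding G_def E_def by auto
  have "E * X = G * P * G - G"
    unfolding E_def G_def using X P including carrier_mat_dims
    by (simp add: minus_mult_distrib_mat[of _ k N])
  also have "\<dots> = 0\<^sub>m k k"
    using GPG G unfolding G_def by simp
  finally have EX: "E * X = 0\<^sub>m k k" .
  have "transpose_mat E = X * (transpose_mat P * G - 1\<^sub>m k)"
    unfolding E_def G_def using X P including carrier_mat_dims
    by (simp add: transpose_minus transpose_mult mult_minus_distrib_mat[of _ N k])
  then have "E * transpose_mat E = E * X * (transpose_mat P * G - 1\<^sub>m k)"
    using X P G E including carrier_mat_dims by simp
  also have "\<dots> = 0\<^sub>m k k"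
    using G P unfolding EX by simp
  finally have E0: "E = 0\<^sub>m k N"
    by (rule mult_transpose_self_eq_zeroD[OF E])
  show ?thesis
  proof (rule eq_matI)
    fix i j assume ij: "i < dim_row (transpose_mat X)" "j < dim_col (transpose_mat X)"
    with E0 X have "E $$ (i,j) = 0"
      by simp
    with ij show "(transpose_mat X * X * P * transpose_mat X) $$ (i,j) = transpose_mat X $$ (i,j)"
      unfolding E_def G_def by simp
  qed (use X P in auto)
qed

lemma sandwich_mult_projection_complement_eq_zero:
  fixes A B Q P R P' :: "real mat"
  assumes A: "A \<in> carrier_mat N k" and B: "B \<in> carrier_mat N l"
    and AB: "transpose_mat A * B = 0\<^sub>m k l"
    and Q: "Q \<in> carrier_mat k k" and P: "P \<in> carrier_mat k k"
    and R: "R \<in> carrier_mat l l" and P': "P' \<in> carrier_mat l l"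
    and AAPA: "transpose_mat A * A * P * transpose_mat A = transpose_mat A"
  shows "A * Q * transpose_mat A *
      (B * R * transpose_mat B + 1\<^sub>m N - A * P * transpose_mat A - B * P' * transpose_mat B)
    = 0\<^sub>m N N"
proof -
  have AtB: "transpose_mat A * (B * C) = 0\<^sub>m k N" if "C \<in> carrier_mat l N" for C
    using A B that including carrier_mat_dims by (simp add: AB flip: assoc_mult_mat)
  have "transpose_mat A *
      (B * R * transpose_mat B + 1\<^sub>m N - A * P * transpose_mat A - B * P' * transpose_mat B)
    = transpose_mat A * (B * (R * transpose_mat B)) + transpose_mat A
      - transpose_mat A * A * P * transpose_mat A - transpose_mat A * (B * (P' * transpose_mat B))"
    using A B P R P' including carrier_mat_dims
    by (simp add: mult_add_distrib_mat mult_minus_distrib_mat)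
  also have "\<dots> = 0\<^sub>m k N"
    using A B R P' by (simp add: AtB AAPA)
  finally have "transpose_mat A *
      (B * R * transpose_mat B + 1\<^sub>m N - A * P * transpose_mat A - B * P' * transpose_mat B)
    = 0\<^sub>m k N" .
  then show ?thesis
    using A B Q P R P' including carrier_mat_dims by simp
qed

lemma filt_mult_complement_eq_zero:
  assumes svdA: "is_svd A UA \<sigma>A VA" and A: "A \<in> carrier_mat N k"
    and svdB: "is_svd B UB \<sigma>B VB" and B: "B \<in> carrier_mat N l"
    and AB: "transpose_mat A * B = 0\<^sub>m k l"
  shows "filt A VA \<sigma>A m * (filt B VB \<sigma>B n + 1\<^sub>m N - proj A - proj B) = 0\<^sub>m N N"
proof -
  have VA: "orth_mat k VA" and VB: "orth_mat l VB"
    using svdA svdB A B unfolding is_svd_def by auto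
  note gramA = gram_mat_svd[OF svdA A] and gramB = gram_mat_svd[OF svdB B]
  have "transpose_mat A * A * pinv (transpose_mat A * A) * transpose_mat A = transpose_mat A"
    using A orth_diagonalizable_pinv[OF VA gramA] by (rule gram_mult_inner_inverse_transpose)
  with A B show ?thesis
    unfolding filt_def proj_def
    by (auto intro!: sandwich_mult_projection_complement_eq_zero AB
        orth_diagonalizable_pinv(1)[OF VA gramA] orth_diagonalizable_pinv(1)[OF VB gramB]
        orth_diagonalizable_pinv(1)[OF VA gram_n_orth_conj_diag]
        orth_diagonalizable_pinv(1)[OF VB gram_n_orth_conj_diag])
qed

theorem mainTheorem5:
  fixes N NS NL :: nat
    and Sg Lm US VS UL VL :: "real mat"
    and \<sigma>S \<sigma>L :: "nat \<Rightarrow> real"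
  assumes Sg: "star_to_rwg N NS Sg"
    and Lm: "loop_to_rwg N NL Lm"
    and orth: "transpose_mat Sg * Lm = 0\<^sub>m NS NL"
    and svdS: "is_svd Sg US \<sigma>S VS"
    and svdL: "is_svd Lm UL \<sigma>L VL"
  shows "(\<forall>m n. 1 \<le> m \<and> m \<le> NS \<and> 1 \<le> n \<and> n \<le> NL \<longrightarrow>
            filt Sg VS \<sigma>S m *
              (filt Lm VL \<sigma>L n + 1\<^sub>m N - proj Sg - proj Lm) = 0\<^sub>m N N)
       \<and> (\<forall>m n. 1 \<le> m \<and> m \<le> NL \<and> 1 \<le> n \<and> n \<le> NS \<longrightarrow>
            filt Lm VL \<sigma>L m *
              (filt Sg VS \<sigma>S n + 1\<^sub>m N - proj Lm - proj Sg) = 0\<^sub>m N N)"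
proof -
  have Sg_carrier: "Sg \<in> carrier_mat N NS"
    using Sg unfolding star_to_rwg_def by simp
  have Lm_carrier: "Lm \<in> carrier_mat N NL"
    using Lm unfolding loop_to_rwg_def by simp
  have orth': "transpose_mat Lm * Sg = 0\<^sub>m NL NS"
    using arg_cong[OF orth, of transpose_mat] Sg_carrier Lm_carrier by (simp add: transpose_mult)
  show ?thesis
    using filt_mult_complement_eq_zero[OF svdS Sg_carrier svdL Lm_carrier orth]
      filt_mult_complement_eq_zero[OF svdL Lm_carrier svdS Sg_carrier orth']
    by blast
qed

end
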